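(* Let $n\ge1$ and let $i,j,k\in\{0,\dots,2^n-1\}$ be mutually distinct. (a) If $i\,n\,j$ and $j\,n\,k$, then not $i\,n\,k$; if $i\,n\,j$ and ($j\,d\,k$ or $j\,c\,k$), then $i\,n\,k$. (b) If $i\,c\,j$ and $j\,c\,k$, then $i\,c\,k$. (c) If $i\,d\,j$ and $j\,d\,k$, then $i\,c\,k$. (d) If $i\,c\,j$ and $j\,d\,k$, then $i\,d\,k$.
   Context: For $n\ge1$, an $n$-path is a string $\alpha_0\alpha_1\cdots\alpha_n$ with $\alpha_k\in\{0,1\}$, $\alpha_0=0$; the $n$-paths are identified with $\{0,\dots,2^n-1\}$, the path $\omega_j$ being the one whose string is the binary representation of $j$ (with $\alpha_n$ least significant). $D^n$ is the $2^n\times 2^n$ matrix with $D^n_{jk}=D^n(\omega_j,\omega_k)$, where $D^n(\omega,\omega')=2^{-n}\prod_{k=1}^n i^{|\alpha_k-\alpha_{k-1}|}\prod_{k=1}^n i^{-|\alpha'_k-\alpha'_{k-1}|}\,\delta_{\alpha_n\alpha'_n}$ for $\omega=\alpha_0\cdots\alpha_n$, $\omega'=\alpha'_0\cdots\alpha'_n$ (here $i=\sqrt{-1}$). For distinct indices $p,q$ the interference term is $I^n_{pq}=2\,\mathrm{Re}\,D^n_{pq}$. We write $p\,n\,q$ if $I^n_{pq}=0$, $p\,c\,q$ if $I^n_{pq}>0$, and $p\,d\,q$ if $I^n_{pq}<0$. *)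

theory Defs
  imports Complex_Main
begin

text \<open>The n-path with index j (0 <= j < 2^n) is the string alpha_0 alpha_1 ... alpha_n,
  the binary representation of j padded with a leading alpha_0 = 0, alpha_n least significant.\<close>
definition path_bit :: "nat \<Rightarrow> nat \<Rightarrow> nat \<Rightarrow> nat" where
  "path_bit n j k = (j div 2 ^ (n - k)) mod 2"

definition Dmat :: "nat \<Rightarrow> nat \<Rightarrow> nat \<Rightarrow> complex" where
  "Dmat n p q =
     (1 / 2 ^ n)
     * (\<Prod>k\<in>{1..n}. \<i> ^ nat \<bar>int (path_bit n p k) - int (path_bit n p (k - 1))\<bar>)
     * (\<Prod>k\<in>{1..n}. \<i> powi (- int (nat \<bar>int (path_bit n q k) - int (path_bit n q (k - 1))\<bar>)))
     * (if path_bit n p n = path_bit n q n then 1 else 0)"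

definition interference :: "nat \<Rightarrow> nat \<Rightarrow> nat \<Rightarrow> real" where
  "interference n p q = 2 * Re (Dmat n p q)"

definition rel_n :: "nat \<Rightarrow> nat \<Rightarrow> nat \<Rightarrow> bool" where
  "rel_n n p q \<longleftrightarrow> interference n p q = 0"

definition rel_c :: "nat \<Rightarrow> nat \<Rightarrow> nat \<Rightarrow> bool" where
  "rel_c n p q \<longleftrightarrow> interference n p q > 0"

definition rel_d :: "nat \<Rightarrow> nat \<Rightarrow> nat \<Rightarrow> bool" where
  "rel_d n p q \<longleftrightarrow> interference n p q < 0"

end

theory Submission
  imports Defs
begin

text \<open>Let f(p) be the number of bit changes along the path p. Then D_pq equals
  2^-n i^f(p) (-i)^f(q) when the final bits of p and q agree, and 0 otherwise. Since
  alpha_0 = 0, the parity of f(p) is the final bit of p, so in either case the sign of I_pq is the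
  sign of Re (i^(f(p) - f(q))): positive, zero or negative according as f(p) - f(q) is 0, odd or
  2 modulo 4. These differences add up along i, j, k, and the four rules are the multiplication
  table of {1, i, -1, -i}.
  Exponents are kept in nat by writing i^(f(p) - f(q)) as i^(f(p) + 3 f(q)).\<close>

lemma even_sum_bit_changes:
  fixes b :: "nat \<Rightarrow> nat"
  assumes bit: "\<And>k. b k < 2"
  shows "even (\<Sum>k\<in>{1..m}. nat \<bar>int (b k) - int (b (k - 1))\<bar>) \<longleftrightarrow> b m = b 0"
proof (induction m)
  case 0
  then show ?case by simp
next
  case (Suc m)
  have "b (Suc m) \<in> {0, 1}" "b m \<in> {0, 1}" "b 0 \<in> {0, 1}"
    using bit[of "Suc m"] bit[of m] bit[of 0] by auto
  then show ?case
    using Suc.IH by (auto simp: add.commute)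
qed

definition flips :: "nat \<Rightarrow> nat \<Rightarrow> nat" where
  "flips n p = (\<Sum>k\<in>{1..n}. nat \<bar>int (path_bit n p k) - int (path_bit n p (k - 1))\<bar>)"

lemma even_flips_iff:
  assumes "p < 2 ^ n"
  shows "even (flips n p) \<longleftrightarrow> path_bit n p n = 0"
proof -
  have "path_bit n p 0 = 0"
    using assms by (simp add: path_bit_def)
  moreover have "even (flips n p) \<longleftrightarrow> path_bit n p n = path_bit n p 0"
    unfolding flips_def by (rule even_sum_bit_changes) (simp add: path_bit_def)
  ultimately show ?thesis
    by simp
qed

lemma i_power_mod_4: "\<i> ^ m = \<i> ^ (m mod 4)"
proof -
  have "\<i> ^ m = \<i> ^ (4 * (m div 4) + m mod 4)"
    by simp
  also have "\<dots> = (\<i> ^ 4) ^ (m div 4) * \<i> ^ (m mod 4)"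
    by (simp only: power_add power_mult)
  finally show ?thesis
    by simp
qed

lemma Re_i_power:
  "Re (\<i> ^ m) = (if m mod 4 = 0 then 1 else if m mod 4 = 2 then -1 else 0)"
proof -
  have "m mod 4 = 0 \<or> m mod 4 = 1 \<or> m mod 4 = 2 \<or> m mod 4 = 3"
    by auto
  then show ?thesis
    by (subst i_power_mod_4, elim disjE) (simp_all add: power3_eq_cube)
qed

lemma i_powi_neg: "\<i> powi (- int m) = \<i> ^ (3 * m)"
  by (simp add: power_int_minus power_mult power3_eq_cube flip: power_inverse)

lemma interference_eq:
  assumes "p < 2 ^ n" "q < 2 ^ n"
  shows "interference n p q = 2 / 2 ^ n * Re (\<i> ^ (flips n p + 3 * flips n q))"
proof -
  have "Dmat n p q = 1 / 2 ^ n * \<i> ^ (flips n p + 3 * flips n q)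
      * (if path_bit n p n = path_bit n q n then 1 else 0)"
    unfolding Dmat_def flips_def i_powi_neg by (simp add: power_add power_sum sum_distrib_left)
  moreover have "Re (\<i> ^ (flips n p + 3 * flips n q)) = 0" if "path_bit n p n \<noteq> path_bit n q n"
  proof -
    have "odd (flips n p + 3 * flips n q)"
      using that even_flips_iff[OF assms(1)] even_flips_iff[OF assms(2)]
      by (auto simp: path_bit_def)
    then show ?thesis
      by (simp add: Re_i_power) presburger
  qed
  ultimately show ?thesis
    unfolding interference_def by auto
qed

lemma
  assumes "p < 2 ^ n" "q < 2 ^ n"
  shows rel_n_iff: "rel_n n p q \<longleftrightarrow> Re (\<i> ^ (flips n p + 3 * flips n q)) = 0"
    and rel_c_iff: "rel_c n p q \<longleftrightarrow> Re (\<i> ^ (flips n p + 3 * flips n q)) > 0"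
    and rel_d_iff: "rel_d n p q \<longleftrightarrow> Re (\<i> ^ (flips n p + 3 * flips n q)) < 0"
  unfolding rel_n_def rel_c_def rel_d_def interference_eq[OF assms]
  by (auto simp: zero_less_divide_iff divide_less_0_iff zero_less_mult_iff mult_less_0_iff)

lemma Re_i_power_sign_rules:
  fixes a b :: nat
  defines "x \<equiv> Re (\<i> ^ a)" and "y \<equiv> Re (\<i> ^ b)" and "z \<equiv> Re (\<i> ^ (a + b))"
  shows "(x = 0 \<and> y = 0 \<longrightarrow> z \<noteq> 0)
       \<and> (x = 0 \<and> (y < 0 \<or> y > 0) \<longrightarrow> z = 0)
       \<and> (x > 0 \<and> y > 0 \<longrightarrow> z > 0)
       \<and> (x < 0 \<and> y < 0 \<longrightarrow> z > 0)
       \<and> (x > 0 \<and> y < 0 \<longrightarrow> z < 0)"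
proof -
  have "(a + b) mod 4 = (a mod 4 + b mod 4) mod 4"
    by (simp add: mod_add_eq)
  moreover have "a mod 4 = 0 \<or> a mod 4 = 1 \<or> a mod 4 = 2 \<or> a mod 4 = 3"
    and "b mod 4 = 0 \<or> b mod 4 = 1 \<or> b mod 4 = 2 \<or> b mod 4 = 3"
    by auto
  ultimately show ?thesis
    unfolding x_def y_def z_def Re_i_power by (elim disjE) simp_all
qed

theorem corollary2p2:
  fixes n i j k :: nat
  assumes "n \<ge> 1" and "i < 2 ^ n" and "j < 2 ^ n" and "k < 2 ^ n"
    and "i \<noteq> j" and "j \<noteq> k" and "i \<noteq> k"
  shows "((rel_n n i j \<and> rel_n n j k) \<longrightarrow> \<not> rel_n n i k)
       \<and> ((rel_n n i j \<and> (rel_d n j k \<or> rel_c n j k)) \<longrightarrow> rel_n n i k)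
       \<and> ((rel_c n i j \<and> rel_c n j k) \<longrightarrow> rel_c n i k)
       \<and> ((rel_d n i j \<and> rel_d n j k) \<longrightarrow> rel_c n i k)
       \<and> ((rel_c n i j \<and> rel_d n j k) \<longrightarrow> rel_d n i k)"
proof -
  define a where "a = flips n i + 3 * flips n j"
  define b where "b = flips n j + 3 * flips n k"
  have "a + b = (flips n i + 3 * flips n k) + 4 * flips n j"
    by (simp add: a_def b_def)
  then have "Re (\<i> ^ (a + b)) = Re (\<i> ^ (flips n i + 3 * flips n k))"
    by (simp add: power_add power_mult)
  with Re_i_power_sign_rules[of a b] show ?thesis
    using assms(2-4) by (simp add: rel_n_iff rel_c_iff rel_d_iff a_def b_def)
qed
end
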